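(* Let $x(z)$ be a holomorphic function on an open set $\Omega\subset\mathbf{C}$ with $\ddot{x}=d^2x/dz^2$ not identically zero, and define the meromorphic function $f(z)=z+2\dot{x}(z)/\ddot{x}(z)$, where $\dot{x}=dx/dz$. If $g\in PSL(2,\mathbf{C})$, acting by Möbius transformation, satisfies $g(\Omega)=\Omega$ and $x(gz)=x(z)$, then $f$ is covariant under $g$: $f(g(z))=g(f(z))$.
   Context: In the paper, $x(z)$ is the inverse of the Schwarz map $S$ of the hypergeometric equation restricted to the upper half-plane, and $f=DS\circ S^{-1}$ is expressed as $f(z)=z+2\dot{x}/\ddot{x}$, where $DS$ is the derived Schwarz map. *)

theory Defs
  imports "HOL-Complex_Analysis.Complex_Analysis"
begin

text \<open>Moebius transformation of a representative (a,b,c,d) of an element of PSL(2,C).\<close>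
definition moebius :: "complex \<Rightarrow> complex \<Rightarrow> complex \<Rightarrow> complex \<Rightarrow> complex \<Rightarrow> complex" where
  "moebius a b c d z = (a * z + b) / (c * z + d)"

definition schwarz_f :: "(complex \<Rightarrow> complex) \<Rightarrow> complex \<Rightarrow> complex" where
  "schwarz_f x z = z + 2 * deriv x z / deriv (deriv x) z"

end

theory Submission
  imports Defs
begin

text \<open>Write \<open>g\<close> for the Moebius map and \<open>e = c z + d\<close>, so that \<open>g' z = 1 / e\<^sup>2\<close> when
  \<open>a d - b c = 1\<close>. Differentiating \<open>x \<circ> g = x\<close> once gives \<open>x'(g z) = e\<^sup>2 x'(z)\<close>, and
  differentiating this identity again gives \<open>x''(g z) = e\<^sup>3 (e x''(z) + 2 c x'(z))\<close>.
  Substituting both into \<open>f (g z) = g z + 2 x'(g z) / x''(g z)\<close> leaves a rational identity in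
  \<open>z, x'(z), x''(z)\<close> that reduces to \<open>g (f z)\<close> precisely because the determinant is \<open>1\<close>.\<close>

lemma moebius_has_field_derivative:
  assumes "c * z + d \<noteq> 0"
  shows "(moebius a b c d has_field_derivative (a * d - b * c) / (c * z + d)^2) (at z)"
  unfolding moebius_def[abs_def]
  by (rule derivative_eq_intros refl | use assms in \<open>auto simp: power2_eq_square algebra_simps\<close>)+

lemma deriv_chain_eq:
  fixes F G H :: "complex \<Rightarrow> complex"
  assumes "open S" "F holomorphic_on S" "z \<in> S" "G z \<in> S"
    and G: "(G has_field_derivative G') (at z)"
    and H: "(H has_field_derivative H') (at z)"
    and FG_eq_H: "\<And>w. w \<in> S \<Longrightarrow> F (G w) = H w"
  shows "deriv F (G z) * G' = H'"
proof -
  have "(F has_field_derivative deriv F (G z)) (at (G z))"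
    using assms(2,1,4) by (rule holomorphic_derivI)
  then have "((\<lambda>w. F (G w)) has_field_derivative deriv F (G z) * G') (at z)"
    using G by (rule DERIV_chain2)
  then have "(H has_field_derivative deriv F (G z) * G') (at z)"
    using has_field_derivative_transform_within_open[where S = S] assms(1,3) FG_eq_H by blast
  then show ?thesis
    using H by (rule DERIV_unique)
qed

lemma moebius_add_ratio:
  fixes a b c d z p q :: complex
  assumes det: "a * d - b * c = 1" and "c * z + d \<noteq> 0" "q \<noteq> 0"
    and "(c * z + d) * q + 2 * c * p \<noteq> 0"
  shows "moebius a b c d z + 2 * p / ((c * z + d) * ((c * z + d) * q + 2 * c * p))
         = moebius a b c d (z + 2 * p / q)"
proof -
  define e D where "e = c * z + d" and "D = (c * z + d) * q + 2 * c * p"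
  have "e \<noteq> 0" "D \<noteq> 0"
    using assms e_def D_def by auto
  have "moebius a b c d z + 2 * p / (e * D) = ((a * z + b) * D + 2 * p) / (e * D)"
    using \<open>e \<noteq> 0\<close> \<open>D \<noteq> 0\<close> unfolding moebius_def e_def[symmetric] by (simp add: field_simps)
  also have "(a * z + b) * D + 2 * p = e * ((a * z + b) * q + 2 * a * p)"
    using det unfolding e_def D_def by algebra
  also have "e * ((a * z + b) * q + 2 * a * p) / (e * D) = ((a * z + b) * q + 2 * a * p) / D"
    using \<open>e \<noteq> 0\<close> by simp
  also have "\<dots> = (q * (a * (z + 2 * p / q) + b)) / (q * (c * (z + 2 * p / q) + d))"
  proof -
    have "q * (a * (z + 2 * p / q) + b) = (a * z + b) * q + 2 * a * p"
         "q * (c * (z + 2 * p / q) + d) = D"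
      using \<open>q \<noteq> 0\<close> unfolding D_def by (simp_all add: field_simps)
    then show ?thesis by simp
  qed
  also have "\<dots> = moebius a b c d (z + 2 * p / q)"
    using \<open>q \<noteq> 0\<close> unfolding moebius_def by simp
  finally show ?thesis
    unfolding e_def D_def .
qed

locale moebius_invariant =
  fixes x :: "complex \<Rightarrow> complex" and \<Omega> :: "complex set" and a b c d :: complex
  assumes open_domain: "open \<Omega>"
    and holomorphic: "x holomorphic_on \<Omega>"
    and det: "a * d - b * c = 1"
    and no_pole: "\<And>z. z \<in> \<Omega> \<Longrightarrow> c * z + d \<noteq> 0"
    and maps_into: "\<And>z. z \<in> \<Omega> \<Longrightarrow> moebius a b c d z \<in> \<Omega>"
    and invariant: "\<And>z. z \<in> \<Omega> \<Longrightarrow> x (moebius a b c d z) = x z"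
begin

lemma moebius_derivative:
  assumes "z \<in> \<Omega>"
  shows "(moebius a b c d has_field_derivative 1 / (c * z + d)^2) (at z)"
  using moebius_has_field_derivative[OF no_pole[OF assms], of a b] det by simp

lemma deriv_moebius:
  assumes "z \<in> \<Omega>"
  shows "deriv x (moebius a b c d z) = (c * z + d)^2 * deriv x z"
proof -
  have "deriv x (moebius a b c d z) * (1 / (c * z + d)^2) = deriv x z"
    using open_domain holomorphic assms maps_into[OF assms] moebius_derivative[OF assms]
      holomorphic_derivI[OF holomorphic open_domain assms] invariant
    by (rule deriv_chain_eq)
  then show ?thesis
    using no_pole[OF assms] by (simp add: field_simps)
qed

lemma deriv2_moebius:
  assumes "z \<in> \<Omega>"
  shows "deriv (deriv x) (moebius a b c d z)
         = (c * z + d)^3 * ((c * z + d) * deriv (deriv x) z + 2 * c * deriv x z)"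
proof -
  have holomorphic': "deriv x holomorphic_on \<Omega>"
    using holomorphic open_domain by (rule holomorphic_deriv)
  have "((\<lambda>w. (c * w + d)^2 * deriv x w) has_field_derivative
          2 * c * (c * z + d) * deriv x z + (c * z + d)^2 * deriv (deriv x) z) (at z)"
    by (rule derivative_eq_intros refl holomorphic_derivI[OF holomorphic' open_domain assms]
        | simp)+
  with open_domain holomorphic' assms maps_into[OF assms] moebius_derivative[OF assms]
  have "deriv (deriv x) (moebius a b c d z) * (1 / (c * z + d)^2)
        = 2 * c * (c * z + d) * deriv x z + (c * z + d)^2 * deriv (deriv x) z"
    using deriv_moebius by (rule deriv_chain_eq)
  then have "deriv (deriv x) (moebius a b c d z)
             = (2 * c * (c * z + d) * deriv x z + (c * z + d)^2 * deriv (deriv x) z) * (c * z + d)^2"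
    using no_pole[OF assms] by (simp add: divide_eq_eq)
  then show ?thesis
    by (simp add: power2_eq_square power3_eq_cube algebra_simps)
qed

lemma schwarz_f_moebius:
  assumes "z \<in> \<Omega>" "deriv (deriv x) z \<noteq> 0" "deriv (deriv x) (moebius a b c d z) \<noteq> 0"
  shows "schwarz_f x (moebius a b c d z) = moebius a b c d (schwarz_f x z)"
proof -
  define e p q where "e = c * z + d" and "p = deriv x z" and "q = deriv (deriv x) z"
  have "e \<noteq> 0"
    using no_pole[OF assms(1)] e_def by simp
  have "e * q + 2 * c * p \<noteq> 0"
    using assms(3) deriv2_moebius[OF assms(1)] unfolding e_def p_def q_def by simp
  have "schwarz_f x (moebius a b c d z)
        = moebius a b c d z + 2 * (e^2 * p) / (e^3 * (e * q + 2 * c * p))"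
    unfolding schwarz_f_def deriv_moebius[OF assms(1)] deriv2_moebius[OF assms(1)] e_def p_def q_def ..
  also have "\<dots> = moebius a b c d z + 2 * p / (e * (e * q + 2 * c * p))"
    using \<open>e \<noteq> 0\<close> by (simp add: power2_eq_square power3_eq_cube)
  also have "\<dots> = moebius a b c d (z + 2 * p / q)"
    using moebius_add_ratio det \<open>e \<noteq> 0\<close> assms(2) \<open>e * q + 2 * c * p \<noteq> 0\<close>
    unfolding e_def q_def by blast
  finally show ?thesis
    unfolding schwarz_f_def p_def q_def .
qed

end

theorem proposition3p1:
  fixes x :: "complex \<Rightarrow> complex" and \<Omega> :: "complex set" and a b c d :: complex
  assumes "open \<Omega>"
    and "x holomorphic_on \<Omega>"
    and "\<exists>z\<in>\<Omega>. deriv (deriv x) z \<noteq> 0"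
    and "a * d - b * c = 1"
    and "\<forall>z\<in>\<Omega>. c * z + d \<noteq> 0"
    and "moebius a b c d ` \<Omega> = \<Omega>"
    and "\<forall>z\<in>\<Omega>. x (moebius a b c d z) = x z"
  shows "\<forall>z\<in>\<Omega>. deriv (deriv x) z \<noteq> 0 \<longrightarrow>
            deriv (deriv x) (moebius a b c d z) \<noteq> 0 \<longrightarrow>
            c * schwarz_f x z + d \<noteq> 0 \<longrightarrow>
            schwarz_f x (moebius a b c d z) = moebius a b c d (schwarz_f x z)"
proof -
  interpret moebius_invariant x \<Omega> a b c d
    using assms(1,2,4,5,6,7) by unfold_locales auto
  show ?thesis
    using schwarz_f_moebius by blast
qed

end
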